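(* Let $d\ge1$, $m=2^d$, and $x\in[0,\infty)^m$ with first positive index $i^*$. Then $\mathrm{SPiRiT}_\infty(x)=S\,P\,i_\infty\big(R\, i_\infty(Tx)\big)\in\{0,1\}^d$ is the binary representation of $i^*-1$ if $i^*\ge1$, and is the zero vector if $i^*=0$.
   Context: Let $m=2^d$. Consider the complete binary tree with nodes indexed $1,\dots,2m-1$: node $1$ is the root, node $k\in[m-1]$ has left child $2k$ and right child $2k+1$; leaf number $i\in[m]$ is node $m+i-1$. For $i\in[m]$ let $\mathrm{Anc}(i)=\{\lfloor (m+i-1)/2^h\rfloor: h=0,\dots,d\}$ and $\mathrm{Lop}(i)=\{k-1: k\in \mathrm{Anc}(i),\ k\text{ odd},\ k\ge 3\}$. Tree matrix $T\in\{0,1\}^{(2m-1)\times m}$: $T(k,i)=1$ iff $k\in\mathrm{Anc}(i)$. Roots matrix $R\in\{0,1\}^{m\times(2m-1)}$: for $j\in[m-1]$, $R(j,k)=1$ iff $k\in\mathrm{Lop}(j+1)$; row $m$ of $R$ is the indicator vector of $\{1\}$. Pairwise matrix $P\in\{-1,0,1\}^{m\times m}$: $(Pu)(1)=u(1)$ and $(Pu)(k)=u(k)-u(k-1)$ for $k\ge 2$. Sketch matrix $S\in\{0,1\}^{d\times m}$: $S(h,k)$ is the $h$-th bit (coefficient of $2^{h-1}$) of $k-1$. For a real vector $y$, $i_\infty(y)$ is the $0/1$ vector with entry $1$ exactly where $y$ is nonzero. The first positive index of $x\in[0,\infty)^m$ is the smallest $i\in[m]$ with $x(i)>0$, or $0$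 if $x=0$. "Binary representation of $n$" means the vector whose $h$-th entry is the coefficient of $2^{h-1}$ in $n$. *)

theory Defs
  imports Complex_Main
begin

text \<open>Vectors are functions nat => real indexed from 1; matrices are functions
  nat => nat => real indexed from 1. Dimensions are carried explicitly.\<close>

definition mat_vec :: "(nat \<Rightarrow> nat \<Rightarrow> real) \<Rightarrow> nat \<Rightarrow> (nat \<Rightarrow> real) \<Rightarrow> nat \<Rightarrow> real" where
  "mat_vec A n v = (\<lambda>k. \<Sum>j=1..n. A k j * v j)"

definition i_inf :: "(nat \<Rightarrow> real) \<Rightarrow> nat \<Rightarrow> real" where
  "i_inf y = (\<lambda>k. if y k \<noteq> 0 then 1 else 0)"

definition Anc :: "nat \<Rightarrow> nat \<Rightarrow> nat set" where
  "Anc d i = {(2^d + i - 1) div 2^h | h. h \<le> d}"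

definition Lop :: "nat \<Rightarrow> nat \<Rightarrow> nat set" where
  "Lop d i = {k - 1 | k. k \<in> Anc d i \<and> odd k \<and> k \<ge> 3}"

definition treeM :: "nat \<Rightarrow> nat \<Rightarrow> nat \<Rightarrow> real" where
  "treeM d k i = (if k \<in> Anc d i then 1 else 0)"

definition rootsM :: "nat \<Rightarrow> nat \<Rightarrow> nat \<Rightarrow> real" where
  "rootsM d j k = (if j \<le> 2^d - 1 then (if k \<in> Lop d (j+1) then 1 else 0)
                   else (if k = 1 then 1 else 0))"

definition pairM :: "nat \<Rightarrow> nat \<Rightarrow> real" where
  "pairM k l = (if l = k then 1 else if k \<ge> 2 \<and> l = k - 1 then -1 else 0)"

definition sketchM :: "nat \<Rightarrow> nat \<Rightarrow> real" where
  "sketchM h k = real (((k - 1) div 2^(h - 1)) mod 2)"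

definition SPiRiT_inf :: "nat \<Rightarrow> (nat \<Rightarrow> real) \<Rightarrow> nat \<Rightarrow> real" where
  "SPiRiT_inf d x =
     mat_vec sketchM (2^d)
       (mat_vec pairM (2^d)
         (i_inf (mat_vec (rootsM d) (2 * 2^d - 1)
           (i_inf (mat_vec (treeM d) (2^d) x)))))"

definition first_pos :: "nat \<Rightarrow> (nat \<Rightarrow> real) \<Rightarrow> nat" where
  "first_pos m x = (if \<exists>i\<in>{1..m}. x i > 0 then (LEAST i. i \<in> {1..m} \<and> x i > 0) else 0)"

definition bin_rep :: "nat \<Rightarrow> nat \<Rightarrow> real" where
  "bin_rep n h = real ((n div 2^(h - 1)) mod 2)"

end

theory Submission
  imports Defs "HOL-Library.Discrete_Functions"
begin

text \<open>In heap numbering the ancestor at height h of leaf i is the node (2^d + (i - 1)) div 2^h,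
  so, as x \<ge> 0 rules out cancellation,
  i_inf (T x) marks the ancestors of the positive leaves. Row j < m of R collects the left
  siblings of the right-child ancestors of leaf j + 1. Such a sibling is an ancestor of leaf i
  exactly when j has a 1 at the highest bit where i - 1 and j differ, i.e. when i \<le> j; row m is
  the root, an ancestor of every leaf. Hence i_inf (R i_inf (T x)) is the step vector with entries 1
  from position i* on, P turns it into the unit vector at i*, and S picks out its column i*, which
  is the binary expansion of i* - 1.\<close>

lemma add_pow2_div_pow2:
  "h \<le> d \<Longrightarrow> (2^d + n) div 2^h = 2^(d-h) + (n::nat) div 2^h"
proof -
  assume "h \<le> d"
  then have "(2::nat)^d = 2^(d-h) * 2^h" by (simp add: power_add[symmetric])
  then show ?thesis by simp
qed

text \<open>At the highest bit where a and b differ, the prefix of b is odd and one more than that of a.\<close>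

lemma less_iff_odd_div_pow2:
  "(a::nat) < b \<longleftrightarrow> (\<exists>h. odd (b div 2^h) \<and> Suc (a div 2^h) = b div 2^h)"
proof
  assume "\<exists>h. odd (b div 2^h) \<and> Suc (a div 2^h) = b div 2^h"
  then obtain h where "Suc (a div 2^h) = b div 2^h" by blast
  then have "a div 2^h < b div 2^h" by simp
  then show "a < b" by (meson div_le_mono not_le)
next
  show "a < b \<Longrightarrow> \<exists>h. odd (b div 2^h) \<and> Suc (a div 2^h) = b div 2^h"
  proof (induction b arbitrary: a rule: less_induct)
    case (less b)
    show ?case
    proof (cases "a div 2 = b div 2")
      case True
      with \<open>a < b\<close> have "odd b" "Suc a = b" by presburger+
      then show ?thesis by (intro exI[of _ 0]) simp
    next
      case False
      with \<open>a < b\<close> have "a div 2 < b div 2" by (simp add: div_le_mono order_less_le)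
      moreover have "b div 2 < b" using \<open>a < b\<close> by simp
      ultimately obtain h where "odd (b div 2 div 2^h)" "Suc (a div 2 div 2^h) = b div 2 div 2^h"
        using less.IH by blast
      then show ?thesis by (intro exI[of _ "Suc h"]) (simp add: div_mult2_eq)
    qed
  qed
qed

lemma le_if_odd_div_pow2: "odd ((n::nat) div 2^h) \<Longrightarrow> 2^h \<le> n"
  by (metis div_greater_zero_iff odd_pos zero_less_numeral zero_less_power)

lemma floor_log_add_pow2_div:
  assumes "h \<le> d" "(n::nat) < 2^d"
  shows "floor_log ((2^d + n) div 2^h) = d - h"
proof (rule floor_log_eqI)
  have "(2::nat)^d = 2^(d-h) * 2^h" using assms(1) by (simp add: power_add[symmetric])
  then have "n div 2^h < 2^(d-h)" using assms(2) by (simp add: less_mult_imp_div_less)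
  then show "(2^d + n) div 2^h < 2 * 2^(d-h)" "2^(d-h) \<le> (2^d + n) div 2^h"
    using add_pow2_div_pow2[OF assms(1)] by simp_all
  then show "0 < (2^d + n) div 2^h" by (meson le_less_trans not_le zero_less_power pos2)
qed

lemma Anc_Suc_iff: "k \<in> Anc d (Suc a) \<longleftrightarrow> (\<exists>h\<le>d. k = (2^d + a) div 2^h)"
  unfolding Anc_def by auto

lemma Lop_Suc_iff:
  "k \<in> Lop d (Suc j) \<longleftrightarrow>
     (\<exists>h\<le>d. odd ((2^d + j) div 2^h) \<and> 3 \<le> (2^d + j) div 2^h \<and> k = (2^d + j) div 2^h - 1)"
  unfolding Lop_def Anc_def by auto

lemma Lop_inter_Anc_imp_less:
  assumes a: "a < 2^d" and j: "j < 2^d" and k: "k \<in> Lop d (Suc j) \<inter> Anc d (Suc a)"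
  shows "a < j"
proof -
  obtain h where h: "h \<le> d" "odd ((2^d + j) div 2^h)" "3 \<le> (2^d + j) div 2^h"
      and k_Lop: "k = (2^d + j) div 2^h - 1"
    using k Lop_Suc_iff by blast
  obtain h' where h': "h' \<le> d" and k_Anc: "k = (2^d + a) div 2^h'"
    using k Anc_Suc_iff by blast
  have "h \<noteq> d" using h(3) j by auto
  then have "even ((2::nat)^(d-h))" using h(1) by simp
  then have odd: "odd (j div 2^h)" using h(2) add_pow2_div_pow2[OF h(1)] by simp
  then have "2^h \<le> j" by (rule le_if_odd_div_pow2)
  have sibling: "k = (2^d + (j - 2^h)) div 2^h"
    using k_Lop \<open>2^h \<le> j\<close> div_add_self2[of "2^h::nat" "2^d + (j - 2^h)"] by simp
  \<comment> \<open>floor_log of a node is its depth, so both descriptions of k live at the same height\<close>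
  have "d - h = d - h'"
    using floor_log_add_pow2_div[OF h(1), of "j - 2^h"] floor_log_add_pow2_div[OF h' a]
      sibling k_Anc j by auto
  then have "h' = h" using h(1) h' by simp
  then have "(j - 2^h) div 2^h = a div 2^h"
    using sibling k_Anc add_pow2_div_pow2[OF h(1)] by simp
  moreover have "(j - 2^h) div 2^h = j div 2^h - 1"
    using \<open>2^h \<le> j\<close> div_add_self2[of "2^h::nat" "j - 2^h"] by simp
  ultimately have "Suc (a div 2^h) = j div 2^h" using odd_pos[OF odd] by linarith
  then show ?thesis using odd less_iff_odd_div_pow2 by blast
qed

lemma less_imp_Lop_inter_Anc:
  assumes j: "j < 2^d" and "a < j"
  shows "Lop d (Suc j) \<inter> Anc d (Suc a) \<noteq> {}"
proof -
  obtain h where odd: "odd (j div 2^h)" and Suc_div: "Suc (a div 2^h) = j div 2^h"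
    using \<open>a < j\<close> less_iff_odd_div_pow2 by blast
  have "2^h \<le> j" using odd by (rule le_if_odd_div_pow2)
  then have "(2::nat)^h < 2^d" using j by linarith
  then have "h < d" by simp
  then have "2 \<le> (2::nat)^(d-h)" "even ((2::nat)^(d-h))"
    using power_increasing[of 1 "d-h" "2::nat"] by simp_all
  then have "odd ((2^d + j) div 2^h)" "3 \<le> (2^d + j) div 2^h"
      "(2^d + j) div 2^h - 1 = (2^d + a) div 2^h"
    using add_pow2_div_pow2[of h d] \<open>h < d\<close> odd odd_pos[OF odd] Suc_div by auto
  then have "(2^d + a) div 2^h \<in> Lop d (Suc j)" "(2^d + a) div 2^h \<in> Anc d (Suc a)"
    using \<open>h < d\<close> unfolding Lop_Suc_iff Anc_Suc_iff by (metis less_imp_le)+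
  then show ?thesis by blast
qed

lemma Lop_inter_Anc_iff:
  assumes "i \<in> {1..2^d}" "j < 2^d"
  shows "Lop d (Suc j) \<inter> Anc d i \<noteq> {} \<longleftrightarrow> i \<le> j"
proof -
  obtain a where i: "i = Suc a" "a < 2^d" using assms(1) by (cases i) auto
  have "Lop d (Suc j) \<inter> Anc d (Suc a) \<noteq> {} \<longleftrightarrow> a < j"
    using Lop_inter_Anc_imp_less[OF i(2) assms(2)] less_imp_Lop_inter_Anc[OF assms(2)] by blast
  then show ?thesis using i by (simp add: Suc_le_eq)
qed

lemma Anc_subset:
  assumes "i \<in> {1..2^d}"
  shows "Anc d i \<subseteq> {1..2 * 2^d - 1}"
proof
  obtain a where i: "i = Suc a" "a < 2^d" using assms by (cases i) auto
  fix k assume "k \<in> Anc d i"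
  then obtain h where "h \<le> d" "k = (2^d + a) div 2^h" using i Anc_Suc_iff by blast
  then show "k \<in> {1..2 * 2^d - 1}"
    using i add_pow2_div_pow2[of h d a] div_le_dividend[of "2^d + a" "2^h"]
    by (auto simp: Suc_le_eq)
qed

lemma one_in_Anc:
  assumes "i \<in> {1..2^d}"
  shows "1 \<in> Anc d i"
proof -
  obtain a where i: "i = Suc a" "a < 2^d" using assms by (cases i) auto
  then have "1 = (2^d + a) div 2^d" using add_pow2_div_pow2[of d d a] by simp
  then show ?thesis using i Anc_Suc_iff by blast
qed

lemma i_inf_mat_vec_nonneg:
  assumes "\<And>j. j \<in> {1..n} \<Longrightarrow> 0 \<le> A k j" "\<And>j. j \<in> {1..n} \<Longrightarrow> 0 \<le> v j"
  shows "i_inf (mat_vec A n v) k = (if \<exists>j\<in>{1..n}. A k j \<noteq> 0 \<and> v j \<noteq> 0 then 1 else 0)"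
proof -
  have "(\<Sum>j=1..n. A k j * v j) = 0 \<longleftrightarrow> (\<forall>j\<in>{1..n}. A k j * v j = 0)"
    using assms by (intro sum_nonneg_eq_0_iff) auto
  then show ?thesis unfolding i_inf_def mat_vec_def by auto
qed

lemma i_inf_treeM:
  assumes nonneg: "\<forall>i\<in>{1..2^d}. 0 \<le> x i"
  shows "i_inf (mat_vec (treeM d) (2^d) x) k = (if \<exists>i\<in>{1..2^d}. k \<in> Anc d i \<and> 0 < x i then 1 else 0)"
proof -
  have "i_inf (mat_vec (treeM d) (2^d) x) k
      = (if \<exists>i\<in>{1..2^d}. treeM d k i \<noteq> 0 \<and> x i \<noteq> 0 then 1 else 0)"
    using nonneg by (intro i_inf_mat_vec_nonneg) (auto simp: treeM_def)
  also have "(\<exists>i\<in>{1..2^d}. treeM d k i \<noteq> 0 \<and> x i \<noteq> 0) \<longleftrightarrow> (\<exists>i\<in>{1..2^d}. k \<in> Anc d i \<and> 0 < x i)"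
  proof (rule bex_cong[OF refl])
    fix i :: nat assume "i \<in> {1..2^d}"
    then have "0 \<le> x i" using nonneg by blast
    then show "treeM d k i \<noteq> 0 \<and> x i \<noteq> 0 \<longleftrightarrow> k \<in> Anc d i \<and> 0 < x i"
      by (auto simp: treeM_def)
  qed
  finally show ?thesis .
qed

lemma i_inf_rootsM_treeM:
  assumes nonneg: "\<forall>i\<in>{1..2^d}. 0 \<le> x i" and j: "j \<in> {1..2^d}"
  shows "i_inf (mat_vec (rootsM d) (2 * 2^d - 1) (i_inf (mat_vec (treeM d) (2^d) x))) j
           = (if \<exists>i\<in>{1..j}. 0 < x i then 1 else 0)"
proof -
  let ?u = "i_inf (mat_vec (treeM d) (2^d) x)"
  have u: "?u k \<noteq> 0 \<longleftrightarrow> (\<exists>i\<in>{1..2^d}. k \<in> Anc d i \<and> 0 < x i)" for k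
    by (simp add: i_inf_treeM[OF nonneg])
  have "(\<exists>k\<in>{1..2 * 2^d - 1}. rootsM d j k \<noteq> 0 \<and> ?u k \<noteq> 0) \<longleftrightarrow> (\<exists>i\<in>{1..j}. 0 < x i)"
  proof (cases "j < 2^d")
    case True
    then have row: "rootsM d j k \<noteq> 0 \<longleftrightarrow> k \<in> Lop d (Suc j)" for k
      unfolding rootsM_def by auto
    have "(\<exists>k\<in>{1..2 * 2^d - 1}. rootsM d j k \<noteq> 0 \<and> ?u k \<noteq> 0)
        \<longleftrightarrow> (\<exists>i\<in>{1..2^d}. 0 < x i \<and> Lop d (Suc j) \<inter> Anc d i \<noteq> {})"
      unfolding u row using Anc_subset by blast
    also have "\<dots> \<longleftrightarrow> (\<exists>i\<in>{1..j}. 0 < x i)"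
      using Lop_inter_Anc_iff[OF _ True] j by auto
    finally show ?thesis .
  next
    case False
    then have "j = 2^d" using j by auto
    moreover have "(2::nat)^d - 1 < 2^d" by simp
    ultimately have "\<not> j \<le> 2^d - 1" by linarith
    then have row: "rootsM d j k \<noteq> 0 \<longleftrightarrow> k = 1" for k
      by (simp add: rootsM_def)
    show ?thesis unfolding u row using \<open>j = 2^d\<close> one_in_Anc by force
  qed
  then show ?thesis
    by (subst i_inf_mat_vec_nonneg) (auto simp: rootsM_def i_inf_def)
qed

lemma exists_pos_upto_iff_first_pos:
  assumes "j \<le> m"
  shows "(\<exists>i\<in>{1..j}. 0 < x i) \<longleftrightarrow> 1 \<le> first_pos m x \<and> first_pos m x \<le> j"
proof (cases "\<exists>i\<in>{1..m}. 0 < x i")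
  case True
  let ?p = "LEAST i. i \<in> {1..m} \<and> 0 < x i"
  have fp: "first_pos m x = ?p" using True by (simp add: first_pos_def)
  have "\<exists>i. i \<in> {1..m} \<and> 0 < x i" using True by blast
  then have "?p \<in> {1..m} \<and> 0 < x ?p" by (rule LeastI_ex)
  then have p: "?p \<in> {1..m}" "0 < x ?p" by auto
  have least: "?p \<le> i" if "i \<in> {1..m}" "0 < x i" for i using that by (simp add: Least_le)
  show ?thesis
  proof
    assume "\<exists>i\<in>{1..j}. 0 < x i"
    then obtain i where "i \<in> {1..j}" "0 < x i" by blast
    then show "1 \<le> first_pos m x \<and> first_pos m x \<le> j" using fp p least[of i] assms by auto
  next
    assume "1 \<le> first_pos m x \<and> first_pos m x \<le> j"
    then show "\<exists>i\<in>{1..j}. 0 < x i" using fp p by auto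
  qed
next
  case False
  then show ?thesis using assms unfolding first_pos_def by auto
qed

lemma first_pos_le: "first_pos m x \<le> m"
  using exists_pos_upto_iff_first_pos[of m m x] by (auto simp: first_pos_def split: if_splits)

lemma mat_vec_pairM:
  assumes "k \<in> {1..m}"
  shows "mat_vec pairM m w k = w k - (if 2 \<le> k then w (k - 1) else 0)"
proof -
  have "mat_vec pairM m w k
      = (\<Sum>l=1..m. (if l = k then w l else 0) - (if 2 \<le> k \<and> l = k - 1 then w l else 0))"
    unfolding mat_vec_def by (rule sum.cong) (auto simp: pairM_def)
  then show ?thesis using assms by (simp add: sum_subtractf; linarith)
qed

lemma mat_vec_pairM_step:
  assumes step: "\<forall>l\<in>{1..m}. w l = (if 1 \<le> p \<and> p \<le> l then 1 else 0)" and k: "k \<in> {1..m}"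
  shows "mat_vec pairM m w k = (if k = p then 1 else 0)"
proof -
  have w: "w l = (if 1 \<le> p \<and> p \<le> l then 1 else 0)" if "1 \<le> l" "l \<le> m" for l
    using step that by simp
  have Pw: "mat_vec pairM m w k = w k - (if 2 \<le> k then w (k - 1) else 0)"
    by (rule mat_vec_pairM[OF k])
  have "1 \<le> k" "k \<le> m" using k by auto
  consider "k = p" | "1 \<le> p" "p < k" | "p = 0 \<or> k < p" by linarith
  then show ?thesis
  proof cases
    case 1
    then show ?thesis using Pw w[of k] w[of "k - 1"] \<open>1 \<le> k\<close> \<open>k \<le> m\<close> by auto
  next
    case 2
    then show ?thesis using Pw w[of k] w[of "k - 1"] \<open>k \<le> m\<close> by simp
  next
    case 3
    then show ?thesis using Pw w[of k] w[of "k - 1"] \<open>1 \<le> k\<close> \<open>k \<le> m\<close> by auto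
  qed
qed

lemma mat_vec_unit:
  assumes "\<forall>k\<in>{1..m}. q k = (if k = p then 1 else 0)"
  shows "mat_vec A m q h = (if p \<in> {1..m} then A h p else 0)"
proof -
  have "mat_vec A m q h = (\<Sum>k=1..m. if k = p then A h k else 0)"
    unfolding mat_vec_def using assms by (intro sum.cong) auto
  then show ?thesis by simp
qed

theorem theorem1:
  fixes d :: nat and x :: "nat \<Rightarrow> real"
  assumes "d \<ge> 1"
    and "\<forall>i\<in>{1..2^d}. x i \<ge> 0"
  shows "\<forall>h\<in>{1..d}.
           SPiRiT_inf d x h =
             (if first_pos (2^d) x \<ge> 1 then bin_rep (first_pos (2^d) x - 1) h else 0)"
proof
  \<comment> \<open>the claim holds for every h, and without d \<ge> 1\<close>
  fix h
  define p where "p = first_pos (2^d) x"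
  define w where "w = i_inf (mat_vec (rootsM d) (2 * 2^d - 1) (i_inf (mat_vec (treeM d) (2^d) x)))"
  have "\<forall>l\<in>{1..2^d}. w l = (if 1 \<le> p \<and> p \<le> l then 1 else 0)"
    using i_inf_rootsM_treeM[OF assms(2)] exists_pos_upto_iff_first_pos[of _ "2^d" x]
    unfolding w_def p_def by auto
  then have "\<forall>k\<in>{1..2^d}. mat_vec pairM (2^d) w k = (if k = p then 1 else 0)"
    using mat_vec_pairM_step by blast
  then have "SPiRiT_inf d x h = (if p \<in> {1..2^d} then sketchM h p else 0)"
    unfolding SPiRiT_inf_def w_def[symmetric] by (rule mat_vec_unit)
  then show "SPiRiT_inf d x h = (if 1 \<le> first_pos (2^d) x then bin_rep (first_pos (2^d) x - 1) h else 0)"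
    using first_pos_le[of "2^d" x] by (simp add: p_def sketchM_def bin_rep_def)
qed

end
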